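(* Let $T$ be a plane labelled bipartite tree with $n$ white and $m$ black vertices, where $n+m$ is even. Fix a white vertex $v_i$ as root vertex. Then the value $i(T)\in\{0,1\}$, computed from the string $c(T)$ built with root vertex $v_i$ and root edge $e$, is the same for every choice of the root edge $e$ among the edges incident to $v_i$.
   Context: A plane labelled bipartite tree with $n$ white and $m$ black vertices is defined as follows. It is a finite tree embedded in the oriented plane, considered up to orientation-preserving homeomorphism. Its vertices are colored white and black so that adjacent vertices have different colors. The white vertices carry the distinct labels $v_1,\dots,v_n$ and the black vertices the distinct labels $u_1,\dots,u_m$. String $c(T)$: choose a white vertex $v_i$ (the root vertex) and an edge $e$ incident to it (the root edge). Walk counterclockwise around $T$, i.e. perform the contour walk around the tree keeping the tree on the left, starting at $v_i$ and first traversing $e$, until returning to $v_i$ after all edges have been traversed twice. Whenever a vertex is met for the first time, write its label. Whenever a vertex is met for the last time, write a closing bracket ")". For example, for the path $v_1-u_1-v_2-u_2$ rooted at $v_1$, $c(T)=v_1u_1v_2u_2))))$. The string contains $n+m$ labels and $n+m$ brackets. Invariant: let - $a$ be the number of pairs of white labels $v_k,v_l$ with $v_k$ occurring before $v_l$ in $c(T)$ and $k>l$; - $b$ be the analogous number of inversions among black labels $u_k$; - $c$ be the number of pairs (black label $u$, white label $v$) with $u$ occurring before $v$ in $c(T)$; - $d$ be the number of pairs (closing bracket, label) with the bracket occurring before the label in $c(T)$; - $e_0=|n-m|/2$. Then $i(T)\in\{0,1\}$ is defined by $i(T)\equiv a+b+c+\tfrac{d+e_0}{2}\pmod 2$. The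 tree is called even if $i(T)=0$ and odd if $i(T)=1$. *)

theory Defs
  imports Main
begin

(* Vertices: white vertex v_i is W i, black vertex u_j is B j. *)
datatype vtx = W nat | B nat

(* Tokens of the string c(T): a label or a closing bracket. *)
datatype tok = Lab vtx | Close

definition verts :: "nat \<Rightarrow> nat \<Rightarrow> vtx set" where
  "verts n m = W ` {1..n} \<union> B ` {1..m}"

(* A plane tree is given by its rotation system: rot v lists the neighbours of v
   in counterclockwise cyclic order around v (starting point irrelevant). *)
definition adj :: "(vtx \<Rightarrow> vtx list) \<Rightarrow> (vtx \<times> vtx) set" where
  "adj rot = {(u, v). v \<in> set (rot u)}"

definition plane_bip_tree :: "nat \<Rightarrow> nat \<Rightarrow> (vtx \<Rightarrow> vtx list) \<Rightarrow> bool" where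
  "plane_bip_tree n m rot \<longleftrightarrow>
     (\<forall>v. v \<notin> verts n m \<longrightarrow> rot v = []) \<and>
     (\<forall>v\<in>verts n m. distinct (rot v) \<and> set (rot v) \<subseteq> verts n m) \<and>
     (\<forall>u v. v \<in> set (rot u) \<longleftrightarrow> u \<in> set (rot v)) \<and>
     (\<forall>i j. W i \<notin> set (rot (W j))) \<and>
     (\<forall>i j. B i \<notin> set (rot (B j))) \<and>
     (\<forall>u\<in>verts n m. \<forall>v\<in>verts n m. (u, v) \<in> (adj rot)\<^sup>*) \<and>
     (\<Sum>v\<in>verts n m. length (rot v)) = 2 * (card (verts n m) - 1)"

definition pos_in :: "'a list \<Rightarrow> 'a \<Rightarrow> nat" where
  "pos_in xs x = (LEAST k. k < length xs \<and> xs ! k = x)"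

definition next_ccw :: "(vtx \<Rightarrow> vtx list) \<Rightarrow> vtx \<Rightarrow> vtx \<Rightarrow> vtx" where
  "next_ccw rot v u = rot v ! ((pos_in (rot v) u + 1) mod length (rot v))"

(* one step of the contour walk on darts (directed edges) *)
definition step :: "(vtx \<Rightarrow> vtx list) \<Rightarrow> vtx \<times> vtx \<Rightarrow> vtx \<times> vtx" where
  "step rot d = (snd d, next_ccw rot (snd d) (fst d))"

(* sequence of vertices visited by the contour walk starting at r, first traversing edge r-w;
   it has 2(#edges)+1 entries, the first and last being r *)
definition walk :: "nat \<Rightarrow> nat \<Rightarrow> (vtx \<Rightarrow> vtx list) \<Rightarrow> vtx \<Rightarrow> vtx \<Rightarrow> vtx list" where
  "walk n m rot r w =
     map (\<lambda>k. fst ((step rot ^^ k) (r, w))) [0..<2 * (card (verts n m) - 1) + 1]"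

(* the string c(T): at each visit, label if first visit, then bracket if last visit *)
definition cstr :: "nat \<Rightarrow> nat \<Rightarrow> (vtx \<Rightarrow> vtx list) \<Rightarrow> vtx \<Rightarrow> vtx \<Rightarrow> tok list" where
  "cstr n m rot r w =
     (let ws = walk n m rot r w in
      concat (map (\<lambda>k. (if ws ! k \<notin> set (take k ws) then [Lab (ws ! k)] else [])
                      @ (if ws ! k \<notin> set (drop (Suc k) ws) then [Close] else []))
                  [0..<length ws]))"

definition count_pairs :: "(tok \<Rightarrow> tok \<Rightarrow> bool) \<Rightarrow> tok list \<Rightarrow> nat" where
  "count_pairs P s = card {(i, j). i < j \<and> j < length s \<and> P (s ! i) (s ! j)}"

definition inv_a :: "tok list \<Rightarrow> nat" where
  "inv_a s = count_pairs (\<lambda>x y. \<exists>k l. x = Lab (W k) \<and> y = Lab (W l) \<and> k > l) s"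

definition inv_b :: "tok list \<Rightarrow> nat" where
  "inv_b s = count_pairs (\<lambda>x y. \<exists>k l. x = Lab (B k) \<and> y = Lab (B l) \<and> k > l) s"

definition inv_c :: "tok list \<Rightarrow> nat" where
  "inv_c s = count_pairs (\<lambda>x y. \<exists>k l. x = Lab (B k) \<and> y = Lab (W l)) s"

definition inv_d :: "tok list \<Rightarrow> nat" where
  "inv_d s = count_pairs (\<lambda>x y. x = Close \<and> (\<exists>z. y = Lab z)) s"

definition e0 :: "nat \<Rightarrow> nat \<Rightarrow> nat" where
  "e0 n m = nat \<bar>int n - int m\<bar> div 2"

definition tree_inv :: "nat \<Rightarrow> nat \<Rightarrow> (vtx \<Rightarrow> vtx list) \<Rightarrow> vtx \<Rightarrow> vtx \<Rightarrow> nat" where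
  "tree_inv n m rot r w =
     (let s = cstr n m rot r w in
      (inv_a s + inv_b s + inv_c s + (inv_d s + e0 n m) div 2) mod 2)"

end

theory Submission
  imports Defs
begin

text \<open>
  The contour walk is the orbit of the dart permutation
  \<open>(u, v) \<mapsto> (v, successor of u in the rotation at v)\<close>.
  Every edge of a tree separates it, so after crossing an edge the walk can only come back
  across the same edge; hence the orbit of any dart contains all \<open>2(|V| - 1)\<close> darts.
  Changing the root edge from \<open>e\<close> to \<open>e'\<close> rotates the walk at an intermediate
  return to the root \<open>r\<close>: the walk \<open>r A r B r\<close> becomes \<open>r B r A r\<close>,
  and the excursions \<open>A\<close>, \<open>B\<close> meet only in \<open>r\<close>, again because the edge
  through which an excursion leaves \<open>r\<close> separates the tree.
  So \<open>c(T) = r X\<^sub>A X\<^sub>B )\<close> turns into \<open>r X\<^sub>B X\<^sub>A )\<close>, where each block has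
  as many labels as brackets, one of each per vertex of its excursion.
  The swap leaves \<open>d\<close> unchanged and changes \<open>a + b + c\<close> by a number of the parity of
  \<open>l\<^sub>A l\<^sub>B\<close>, since every pair of labels from different blocks counts for exactly one of
  \<open>a\<close>, \<open>b\<close>, \<open>c\<close> in exactly one of the two orders.
  As \<open>l\<^sub>A + l\<^sub>B = n + m - 1\<close> is odd, \<open>l\<^sub>A l\<^sub>B\<close> is even.
\<close>

lemma exists_step_leaving:
  assumes "Q (f a)" "\<not> Q (f b)" "a \<le> b"
  shows "\<exists>k. a \<le> k \<and> k < b \<and> Q (f k) \<and> \<not> Q (f (Suc k))"
  using assms
proof (induction b)
  case (Suc b)
  then show ?case
    by (cases "Q (f b)") (auto simp: le_Suc_eq intro: less_SucI)
qed simp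

lemma upt_split: "a \<le> b \<Longrightarrow> b < c \<Longrightarrow> [a..<c] = [a..<b] @ b # [Suc b..<c]"
  using upt_add_eq_append[of a b "c - b"] upt_conv_Cons[of b c] by simp

section \<open>Edges of a tree separate it\<close>

lemma card_connected_sym_rel_ge:
  assumes fin: "finite V" and r: "r \<in> V" and sub: "R \<subseteq> V \<times> V" and sy: "sym R"
    and conn: "\<forall>x\<in>V. (r, x) \<in> R\<^sup>*"
  shows "2 * (card V - 1) \<le> card R"
proof -
  \<comment> \<open>Each vertex other than r contributes the two darts to and from a parent on a shortest path.\<close>
  define dist where "dist x = (LEAST k. (r, x) \<in> R ^^ k)" for x
  have dist_in: "(r, x) \<in> R ^^ dist x" if "x \<in> V" for x
  proof -
    from conn that obtain k where "(r, x) \<in> R ^^ k" using rtrancl_power by blast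
    then show ?thesis unfolding dist_def by (rule LeastI)
  qed
  have dist_pos: "0 < dist x" if "x \<in> V - {r}" for x
    using dist_in[of x] that by (cases "dist x") auto
  define par where "par x = (SOME y. (r, y) \<in> R ^^ (dist x - 1) \<and> (y, x) \<in> R)" for x
  have par: "(r, par x) \<in> R ^^ (dist x - 1) \<and> (par x, x) \<in> R" if "x \<in> V - {r}" for x
  proof -
    have "(r, x) \<in> R ^^ Suc (dist x - 1)" using dist_in[of x] dist_pos[OF that] that by simp
    then obtain y where "(r, y) \<in> R ^^ (dist x - 1) \<and> (y, x) \<in> R" by (rule relpow_Suc_E) blast
    then show ?thesis unfolding par_def by (rule someI)
  qed
  have dist_par: "dist (par x) < dist x" if "x \<in> V - {r}" for x
  proof -
    have "dist (par x) \<le> dist x - 1" unfolding dist_def[of "par x"]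
      by (rule Least_le) (use par[OF that] in blast)
    with dist_pos[OF that] show ?thesis by simp
  qed
  define Up where "Up = (\<lambda>x. (x, par x)) ` (V - {r})"
  define Down where "Down = (\<lambda>x. (par x, x)) ` (V - {r})"
  have card_Up: "card Up = card V - 1" unfolding Up_def
    by (subst card_image) (auto simp: inj_on_def fin r)
  have card_Down: "card Down = card V - 1" unfolding Down_def
    by (subst card_image) (auto simp: inj_on_def fin r)
  have "Up \<inter> Down = {}"
  proof (rule ccontr)
    assume "Up \<inter> Down \<noteq> {}"
    then obtain x y where x: "x \<in> V - {r}" and y: "y \<in> V - {r}" and "(x, par x) = (par y, y)"
      unfolding Up_def Down_def by auto
    then have "x = par y" "y = par x" by auto
    then show False using dist_par[OF x] dist_par[OF y] by simp
  qed
  moreover have "Up \<union> Down \<subseteq> R"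
    using par sy unfolding Up_def Down_def by (auto dest: symD)
  moreover have "finite R" using sub fin by (meson finite_SigmaI rev_finite_subset)
  ultimately have "card Up + card Down \<le> card R"
    by (metis card_Un_disjoint card_mono finite_Un rev_finite_subset)
  then show ?thesis using card_Up card_Down by simp
qed

lemma tree_rel_edge_separates:
  assumes fin: "finite V" and sub: "R \<subseteq> V \<times> V" and sy: "sym R"
    and irr: "\<forall>x. (x, x) \<notin> R"
    and conn: "\<forall>x\<in>V. \<forall>y\<in>V. (x, y) \<in> R\<^sup>*"
    and card_R: "card R = 2 * (card V - 1)"
    and uv: "(u, v) \<in> R"
  obtains S where "v \<in> S" "u \<notin> S"
    "\<And>a b. (a, b) \<in> R \<Longrightarrow> a \<in> S \<Longrightarrow> b \<notin> S \<Longrightarrow> (a, b) = (v, u)"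
    "\<And>a b. (a, b) \<in> R \<Longrightarrow> a \<notin> S \<Longrightarrow> b \<in> S \<Longrightarrow> (a, b) = (u, v)"
proof -
  define R' where "R' = R - {(u, v), (v, u)}"
  define S where "S = {x. (v, x) \<in> R'\<^sup>*}"
  have vu: "(v, u) \<in> R" using uv sy by (auto simp: sym_def)
  have "u \<noteq> v" using uv irr by auto
  have sym_R': "sym R'" using sy unfolding R'_def sym_def by auto
  have "u \<notin> S"
  proof
    \<comment> \<open>otherwise R' would still be connected with two darts fewer than a tree needs\<close>
    assume "u \<in> S"
    then have "(v, u) \<in> R'\<^sup>*" "(u, v) \<in> R'\<^sup>*"
      using sym_R' by (auto simp: S_def intro: symD[OF sym_rtrancl])
    then have "R \<subseteq> R'\<^sup>*" unfolding R'_def by auto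
    then have "R\<^sup>* \<subseteq> R'\<^sup>*" by (meson rtrancl_subset_rtrancl)
    moreover have "u \<in> V" using uv sub by auto
    ultimately have "2 * (card V - 1) \<le> card R'"
      using conn sub sym_R' card_connected_sym_rel_ge[OF fin \<open>u \<in> V\<close>, of R'] by (auto simp: R'_def)
    moreover have "finite R" using sub fin by (meson finite_SigmaI rev_finite_subset)
    then have "card R' = card R - 2"
      unfolding R'_def using uv vu \<open>u \<noteq> v\<close> by (subst card_Diff_subset) auto
    moreover have "card {(u, v), (v, u)} \<le> card R"
      using \<open>finite R\<close> uv vu by (intro card_mono) auto
    ultimately show False using card_R \<open>u \<noteq> v\<close> by simp
  qed
  moreover have "v \<in> S" by (simp add: S_def)
  moreover have "(a, b) = (v, u)" if "(a, b) \<in> R" "a \<in> S" "b \<notin> S" for a b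
  proof -
    have "(a, b) \<notin> R'" using that unfolding S_def by (meson mem_Collect_eq rtrancl.rtrancl_into_rtrancl)
    then show ?thesis using that \<open>u \<notin> S\<close> unfolding R'_def by auto
  qed
  moreover have "(a, b) = (u, v)" if "(a, b) \<in> R" "a \<notin> S" "b \<in> S" for a b
  proof -
    have "(b, a) \<notin> R'" using that unfolding S_def by (meson mem_Collect_eq rtrancl.rtrancl_into_rtrancl)
    then have "(a, b) \<notin> R'" using sym_R' by (meson symD)
    then show ?thesis using that \<open>u \<notin> S\<close> unfolding R'_def by auto
  qed
  ultimately show ?thesis using that by blast
qed

section \<open>The string of a walk and its parity\<close>

(* tokens Pre Post xs is what c(T) records while the walk traverses the segment xs,
   when the vertices in Pre are visited before the segment and those in Post after it. *)
fun tokens :: "vtx set \<Rightarrow> vtx set \<Rightarrow> vtx list \<Rightarrow> tok list" where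
  "tokens Pre Post [] = []"
| "tokens Pre Post (x # xs) =
     (if x \<notin> Pre then [Lab x] else []) @ (if x \<notin> set xs \<union> Post then [Close] else [])
     @ tokens (insert x Pre) Post xs"

lemma tokens_append:
  "tokens Pre Post (xs @ ys) = tokens Pre (Post \<union> set ys) xs @ tokens (Pre \<union> set xs) Post ys"
  by (induction xs arbitrary: Pre) auto

lemma tokens_cong:
  "Pre \<inter> set xs = Pre' \<inter> set xs \<Longrightarrow> Post \<inter> set xs = Post' \<inter> set xs \<Longrightarrow>
   tokens Pre Post xs = tokens Pre' Post' xs"
proof (induction xs arbitrary: Pre Pre')
  case (Cons x xs)
  have "tokens (insert x Pre) Post xs = tokens (insert x Pre') Post' xs"
    by (rule Cons.IH) (use Cons.prems in auto)
  moreover have "x \<in> Pre \<longleftrightarrow> x \<in> Pre'" "x \<in> set xs \<union> Post \<longleftrightarrow> x \<in> set xs \<union> Post'"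
    using Cons.prems by auto
  ultimately show ?case by simp
qed simp

lemma length_filter_labels_tokens:
  "length (filter (\<lambda>t. t \<noteq> Close) (tokens Pre Post xs)) = card (set xs - Pre)"
proof (induction xs arbitrary: Pre)
  case (Cons x xs)
  have "set (x # xs) - Pre = (if x \<in> Pre then {} else {x}) \<union> (set xs - insert x Pre)" by auto
  then have "card (set (x # xs) - Pre) = (if x \<in> Pre then 0 else 1) + card (set xs - insert x Pre)"
    by (simp add: card_insert_if)
  then show ?case using Cons.IH[of "insert x Pre"] by simp
qed simp

lemma length_filter_Close_tokens:
  "length (filter (\<lambda>t. t = Close) (tokens Pre Post xs)) = card (set xs - Post)"
proof (induction xs arbitrary: Pre)
  case (Cons x xs)
  have "set (x # xs) - Post = (if x \<in> set xs \<union> Post then {} else {x}) \<union> (set xs - Post)" by auto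
  then have "card (set (x # xs) - Post) = (if x \<in> set xs \<union> Post then 0 else 1) + card (set xs - Post)"
    by (simp add: card_insert_if)
  then show ?case using Cons.IH[of "insert x Pre"] by simp
qed simp

lemma Lab_in_tokens: "Lab p \<in> set (tokens Pre Post xs) \<Longrightarrow> p \<in> set xs - Pre"
  by (induction xs arbitrary: Pre) (auto split: if_splits)

definition visit_tokens :: "vtx list \<Rightarrow> nat \<Rightarrow> tok list" where
  "visit_tokens ws k =
     (if ws ! k \<notin> set (take k ws) then [Lab (ws ! k)] else [])
     @ (if ws ! k \<notin> set (drop (Suc k) ws) then [Close] else [])"

lemma concat_visit_tokens:
  "concat (map (visit_tokens (pre @ xs)) [length pre..<length (pre @ xs)]) = tokens (set pre) {} xs"
proof (induction xs arbitrary: pre)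
  case (Cons x xs)
  have "[length pre..<length (pre @ x # xs)] = length pre # [length (pre @ [x])..<length ((pre @ [x]) @ xs)]"
    using upt_conv_Cons[of "length pre" "length (pre @ x # xs)"] by simp
  moreover have "visit_tokens (pre @ x # xs) (length pre)
      = (if x \<notin> set pre then [Lab x] else []) @ (if x \<notin> set xs then [Close] else [])"
    by (simp add: visit_tokens_def nth_append)
  ultimately show ?case using Cons.IH[of "pre @ [x]"] by simp
qed simp

lemma cstr_eq_tokens: "cstr n m rot r w = tokens {} {} (walk n m rot r w)"
proof -
  have "cstr n m rot r w = concat (map (visit_tokens (walk n m rot r w)) [0..<length (walk n m rot r w)])"
    unfolding cstr_def Let_def visit_tokens_def by simp
  then show ?thesis using concat_visit_tokens[of "[]"] by simp
qed

lemma tokens_root_split: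
  assumes "set As \<inter> set Bs \<subseteq> {r}"
  shows "tokens {} {} ([r] @ As @ [r] @ Bs @ [r]) = [Lab r] @ tokens {r} {r} As @ tokens {r} {r} Bs @ [Close]"
proof -
  have "tokens {} {} ([r] @ As @ [r] @ Bs @ [r])
      = [Lab r] @ tokens {r} (insert r (set Bs)) As @ tokens (insert r (set As)) {r} Bs @ [Close]"
    by (simp add: tokens_append)
  also have "tokens {r} (insert r (set Bs)) As = tokens {r} {r} As"
    by (rule tokens_cong) (use assms in auto)
  also have "tokens (insert r (set As)) {r} Bs = tokens {r} {r} Bs"
    by (rule tokens_cong) (use assms in auto)
  finally show ?thesis .
qed

definition cross :: "(tok \<Rightarrow> tok \<Rightarrow> bool) \<Rightarrow> tok list \<Rightarrow> tok list \<Rightarrow> nat" where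
  "cross P xs ys = (\<Sum>y\<leftarrow>ys. length (filter (\<lambda>x. P x y) xs))"

lemma cross_Nil_right [simp]: "cross P xs [] = 0"
  by (simp add: cross_def)

lemma cross_Cons_right: "cross P xs (y # ys) = length (filter (\<lambda>x. P x y) xs) + cross P xs ys"
  by (simp add: cross_def)

lemma cross_append_right: "cross P xs (ys @ zs) = cross P xs ys + cross P xs zs"
  by (simp add: cross_def)

lemma cross_append_left: "cross P (xs @ zs) ys = cross P xs ys + cross P zs ys"
  by (simp add: cross_def sum_list_addf)

lemma count_pairs_snoc:
  "count_pairs P (s @ [y]) = count_pairs P s + length (filter (\<lambda>x. P x y) s)"
proof -
  let ?A = "{(i, j). i < j \<and> j < length s \<and> P (s ! i) (s ! j)}"
  let ?B = "(\<lambda>i. (i, length s)) ` {i. i < length s \<and> P (s ! i) y}"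
  have split: "{(i, j). i < j \<and> j < length (s @ [y]) \<and> P ((s @ [y]) ! i) ((s @ [y]) ! j)} = ?A \<union> ?B"
    by (auto simp: nth_append less_Suc_eq)
  have "finite ?A" by (rule finite_subset[of _ "{..<length s} \<times> {..<length s}"]) auto
  then have "card (?A \<union> ?B) = card ?A + card ?B" by (intro card_Un_disjoint) auto
  moreover have "card ?B = length (filter (\<lambda>x. P x y) s)"
    by (subst card_image) (auto simp: inj_on_def length_filter_conv_card)
  ultimately show ?thesis unfolding count_pairs_def split by simp
qed

lemma count_pairs_append:
  "count_pairs P (xs @ ys) = count_pairs P xs + count_pairs P ys + cross P xs ys"
proof (induction ys rule: rev_induct)
  case Nil then show ?case by (simp add: count_pairs_def)
next
  case (snoc y ys)
  then show ?case
    using count_pairs_snoc[of P "xs @ ys" y] count_pairs_snoc[of P ys y]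
    by (simp add: cross_append_right cross_def)
qed

lemma count_pairs_swap:
  "count_pairs P (u @ X @ Y @ v) + cross P Y X = count_pairs P (u @ Y @ X @ v) + cross P X Y"
  by (simp add: count_pairs_append cross_append_left cross_append_right)

abbreviation "white_inv \<equiv> \<lambda>x y. \<exists>k l. x = Lab (W k) \<and> y = Lab (W l) \<and> k > l"
abbreviation "black_inv \<equiv> \<lambda>x y. \<exists>k l. x = Lab (B k) \<and> y = Lab (B l) \<and> k > l"
abbreviation "black_white \<equiv> \<lambda>x y. \<exists>k l. x = Lab (B k) \<and> y = Lab (W l)"
abbreviation "close_label \<equiv> \<lambda>x y. x = Close \<and> (\<exists>z. y = Lab z)"

definition cross_abc :: "tok list \<Rightarrow> tok list \<Rightarrow> nat" where
  "cross_abc X Y = cross white_inv X Y + cross black_inv X Y + cross black_white X Y"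

lemma cross_abc_append_left: "cross_abc (X @ X') Y = cross_abc X Y + cross_abc X' Y"
  by (simp add: cross_abc_def cross_append_left)

lemma cross_abc_append_right: "cross_abc X (Y @ Y') = cross_abc X Y + cross_abc X Y'"
  by (simp add: cross_abc_def cross_append_right)

lemma cross_abc_pair:
  assumes "\<And>p q. x = Lab p \<Longrightarrow> y = Lab q \<Longrightarrow> p \<noteq> q"
  shows "cross_abc [x] [y] + cross_abc [y] [x] = of_bool (x \<noteq> Close \<and> y \<noteq> Close)"
proof (cases x; cases y)
  fix p q assume "x = Lab p" "y = Lab q"
  then show ?thesis using assms by (cases p; cases q) (auto simp: cross_abc_def cross_def)
qed (auto simp: cross_abc_def cross_def)

lemma cross_abc_sym:
  assumes "\<And>p q. Lab p \<in> set X \<Longrightarrow> Lab q \<in> set Y \<Longrightarrow> p \<noteq> q"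
  shows "cross_abc X Y + cross_abc Y X
    = length (filter (\<lambda>t. t \<noteq> Close) X) * length (filter (\<lambda>t. t \<noteq> Close) Y)"
  using assms
proof (induction X)
  case Nil then show ?case by (simp add: cross_abc_def cross_def)
next
  case (Cons x X)
  have single: "cross_abc [x] Y + cross_abc Y [x] = of_bool (x \<noteq> Close) * length (filter (\<lambda>t. t \<noteq> Close) Y)"
    using Cons.prems
  proof (induction Y)
    case Nil then show ?case by (simp add: cross_abc_def cross_def)
  next
    case (Cons y Y)
    have "cross_abc [x] [y] + cross_abc [y] [x] = of_bool (x \<noteq> Close \<and> y \<noteq> Close)"
      by (rule cross_abc_pair) (use Cons.prems in auto)
    then show ?case
      using Cons.IH Cons.prems cross_abc_append_left[of "[y]" Y] cross_abc_append_right[of "[x]" "[y]" Y]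
      by auto
  qed
  show ?case
    using single Cons.IH Cons.prems cross_abc_append_left[of "[x]" X] cross_abc_append_right[of Y "[x]" X]
    by (auto simp: algebra_simps)
qed

lemma cross_close_label:
  "cross close_label X Y = length (filter (\<lambda>t. t = Close) X) * length (filter (\<lambda>t. t \<noteq> Close) Y)"
proof (induction Y)
  case (Cons y Y)
  then show ?case by (cases y) (auto simp: cross_Cons_right)
qed simp

definition inv_parity :: "nat \<Rightarrow> tok list \<Rightarrow> nat" where
  "inv_parity k s = (inv_a s + inv_b s + inv_c s + (inv_d s + k) div 2) mod 2"

lemma tree_inv_eq_inv_parity: "tree_inv n m rot r w = inv_parity (e0 n m) (cstr n m rot r w)"
  by (simp add: tree_inv_def inv_parity_def Let_def)

lemma inv_d_swap:
  assumes "length (filter (\<lambda>t. t = Close) X) = length (filter (\<lambda>t. t \<noteq> Close) X)"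
    and "length (filter (\<lambda>t. t = Close) Y) = length (filter (\<lambda>t. t \<noteq> Close) Y)"
  shows "inv_d (u @ X @ Y @ v) = inv_d (u @ Y @ X @ v)"
proof -
  have "cross close_label X Y = cross close_label Y X"
    using assms by (simp add: cross_close_label)
  then show ?thesis using count_pairs_swap[of close_label u X Y v] by (simp add: inv_d_def)
qed

lemma inv_abc_swap:
  "inv_a (u @ X @ Y @ v) + inv_b (u @ X @ Y @ v) + inv_c (u @ X @ Y @ v) + cross_abc Y X
   = inv_a (u @ Y @ X @ v) + inv_b (u @ Y @ X @ v) + inv_c (u @ Y @ X @ v) + cross_abc X Y"
  using count_pairs_swap[of white_inv u X Y v] count_pairs_swap[of black_inv u X Y v]
    count_pairs_swap[of black_white u X Y v]
  unfolding inv_a_def inv_b_def inv_c_def cross_abc_def by linarith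

lemma inv_parity_swap:
  assumes "\<And>p q. Lab p \<in> set X \<Longrightarrow> Lab q \<in> set Y \<Longrightarrow> p \<noteq> q"
    and "length (filter (\<lambda>t. t = Close) X) = length (filter (\<lambda>t. t \<noteq> Close) X)"
    and "length (filter (\<lambda>t. t = Close) Y) = length (filter (\<lambda>t. t \<noteq> Close) Y)"
    and "even (length (filter (\<lambda>t. t \<noteq> Close) X) * length (filter (\<lambda>t. t \<noteq> Close) Y))"
  shows "inv_parity k (u @ X @ Y @ v) = inv_parity k (u @ Y @ X @ v)"
proof -
  let ?s = "u @ X @ Y @ v" and ?s' = "u @ Y @ X @ v"
  let ?A = "inv_a ?s + inv_b ?s + inv_c ?s + (inv_d ?s + k) div 2"
  let ?A' = "inv_a ?s' + inv_b ?s' + inv_c ?s' + (inv_d ?s' + k) div 2"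
  have "even (cross_abc X Y + cross_abc Y X)"
    using cross_abc_sym[OF assms(1)] assms(4) by simp
  then obtain z where z: "cross_abc X Y + cross_abc Y X = 2 * z" by (rule evenE)
  have "?A + 2 * z = ?A' + 2 * cross_abc X Y"
    using inv_abc_swap[of u X Y v] inv_d_swap[OF assms(2,3), of u v] z by linarith
  then have "(?A + 2 * z) mod 2 = (?A' + 2 * cross_abc X Y) mod 2" by (rule arg_cong)
  then show ?thesis unfolding inv_parity_def by simp
qed

lemma inv_parity_swap_excursions:
  assumes disj: "set As \<inter> set Bs \<subseteq> {r}"
    and odd: "odd (card (set As - {r}) + card (set Bs - {r}))"
  shows "inv_parity k (tokens {} {} ([r] @ As @ [r] @ Bs @ [r]))
       = inv_parity k (tokens {} {} ([r] @ Bs @ [r] @ As @ [r]))"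
proof -
  have disj': "set Bs \<inter> set As \<subseteq> {r}" using disj by blast
  have "inv_parity k ([Lab r] @ tokens {r} {r} As @ tokens {r} {r} Bs @ [Close])
      = inv_parity k ([Lab r] @ tokens {r} {r} Bs @ tokens {r} {r} As @ [Close])"
  proof (rule inv_parity_swap)
    show "p \<noteq> q" if "Lab p \<in> set (tokens {r} {r} As)" "Lab q \<in> set (tokens {r} {r} Bs)" for p q
      using Lab_in_tokens[OF that(1)] Lab_in_tokens[OF that(2)] disj by blast
    show "even (length (filter (\<lambda>t. t \<noteq> Close) (tokens {r} {r} As))
              * length (filter (\<lambda>t. t \<noteq> Close) (tokens {r} {r} Bs)))"
      using odd by (simp add: length_filter_labels_tokens)
  qed (simp_all add: length_filter_labels_tokens length_filter_Close_tokens)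
  then show ?thesis by (simp only: tokens_root_split[OF disj] tokens_root_split[OF disj'])
qed

section \<open>The contour walk of a plane tree\<close>

lemma pos_in_nth: "distinct xs \<Longrightarrow> j < length xs \<Longrightarrow> pos_in xs (xs ! j) = j"
  unfolding pos_in_def by (rule Least_equality) (auto simp: nth_eq_iff_index_eq)

lemma pos_in_in_set:
  assumes "x \<in> set xs"
  shows "pos_in xs x < length xs" "xs ! pos_in xs x = x"
proof -
  obtain j where "j < length xs \<and> xs ! j = x" using assms by (auto simp: in_set_conv_nth)
  then have "pos_in xs x < length xs \<and> xs ! pos_in xs x = x"
    unfolding pos_in_def by (rule LeastI)
  then show "pos_in xs x < length xs" "xs ! pos_in xs x = x" by auto
qed

locale plane_tree =
  fixes n m :: nat and rot :: "vtx \<Rightarrow> vtx list"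
  assumes tree: "plane_bip_tree n m rot"
begin

abbreviation "V \<equiv> verts n m"
abbreviation "R \<equiv> adj rot"

lemma rot_outside: "v \<notin> V \<Longrightarrow> rot v = []"
  using tree unfolding plane_bip_tree_def by blast

lemma distinct_rot: "distinct (rot v)"
  using tree rot_outside unfolding plane_bip_tree_def by (cases "v \<in> V") auto

lemma set_rot_subset: "set (rot v) \<subseteq> V"
  using tree rot_outside unfolding plane_bip_tree_def by (cases "v \<in> V") auto

lemma adj_iff: "(u, v) \<in> R \<longleftrightarrow> v \<in> set (rot u)"
  by (simp add: adj_def)

lemma rot_sym: "v \<in> set (rot u) \<longleftrightarrow> u \<in> set (rot v)"
  using tree unfolding plane_bip_tree_def by blast

lemma sym_adj: "sym R"
  unfolding sym_def adj_iff using rot_sym by blast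

lemma finite_verts: "finite V"
  by (simp add: verts_def)

lemma card_verts: "card V = n + m"
proof -
  have "card V = card (W ` {1..n}) + card (B ` {1..m})"
    unfolding verts_def by (rule card_Un_disjoint) auto
  also have "\<dots> = n + m" by (simp add: card_image inj_on_def)
  finally show ?thesis .
qed

lemma adj_eq_Sigma: "R = (SIGMA u:V. set (rot u))"
  using rot_outside unfolding adj_def by fastforce

lemma adj_subset: "R \<subseteq> V \<times> V"
  using set_rot_subset unfolding adj_eq_Sigma by blast

lemma finite_adj: "finite R"
  using adj_subset finite_verts by (meson finite_SigmaI rev_finite_subset)

lemma adj_irrefl: "\<forall>x. (x, x) \<notin> R"
proof
  fix x show "(x, x) \<notin> R"
    using tree unfolding plane_bip_tree_def adj_iff by (cases x) auto
qed

lemma adj_connected: "\<forall>x\<in>V. \<forall>y\<in>V. (x, y) \<in> R\<^sup>*"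
  using tree unfolding plane_bip_tree_def by blast

lemma card_adj: "card R = 2 * (card V - 1)"
proof -
  have "card R = (\<Sum>u\<in>V. card (set (rot u)))"
    unfolding adj_eq_Sigma by (rule card_SigmaI) (auto simp: finite_verts)
  also have "\<dots> = (\<Sum>u\<in>V. length (rot u))" using distinct_rot by (simp add: distinct_card)
  finally show ?thesis using tree unfolding plane_bip_tree_def by simp
qed

lemmas adj_edge_separates =
  tree_rel_edge_separates[OF finite_verts adj_subset sym_adj adj_irrefl adj_connected card_adj]

lemma next_ccw_nth:
  "j < length (rot x) \<Longrightarrow> next_ccw rot x (rot x ! j) = rot x ! (Suc j mod length (rot x))"
  unfolding next_ccw_def using pos_in_nth[OF distinct_rot] by simp

lemma next_ccw_in_rot: "u \<in> set (rot v) \<Longrightarrow> next_ccw rot v u \<in> set (rot v)"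
proof -
  assume "u \<in> set (rot v)"
  then have "0 < length (rot v)" by (cases "rot v") auto
  then show ?thesis unfolding next_ccw_def by simp
qed

lemma step_in_adj: "d \<in> R \<Longrightarrow> step rot d \<in> R"
proof -
  assume "d \<in> R"
  then obtain u v where "d = (u, v)" "u \<in> set (rot v)" by (cases d) (simp add: adj_iff rot_sym)
  then show ?thesis by (simp add: step_def adj_iff next_ccw_in_rot)
qed

lemma inj_on_step: "inj_on (step rot) R"
proof (rule inj_onI)
  fix d d' assume "d \<in> R" "d' \<in> R" and eq: "step rot d = step rot d'"
  then obtain u u' v where d: "d = (u, v)" and d': "d' = (u', v)"
    and u: "u \<in> set (rot v)" and u': "u' \<in> set (rot v)"
    by (cases d, cases d') (auto simp: step_def adj_iff rot_sym)
  let ?L = "length (rot v)" and ?p = "pos_in (rot v) u" and ?p' = "pos_in (rot v) u'"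
  have "rot v ! (Suc ?p mod ?L) = rot v ! (Suc ?p' mod ?L)"
    using eq by (simp add: step_def d d' next_ccw_def)
  moreover have "0 < ?L" using u by (cases "rot v") auto
  ultimately have "Suc ?p mod ?L = Suc ?p' mod ?L"
    using nth_eq_iff_index_eq[OF distinct_rot] by simp
  then have "?p = ?p'" using pos_in_in_set(1)[OF u] pos_in_in_set(1)[OF u']
    by (metis Suc_lessI mod_Suc mod_less nat.inject nat.simps(3))
  then show "d = d'" using d d' pos_in_in_set(2)[OF u] pos_in_in_set(2)[OF u'] by metis
qed

definition dart_walk :: "vtx \<times> vtx \<Rightarrow> nat \<Rightarrow> vtx \<times> vtx" where
  "dart_walk d k = (step rot ^^ k) d"

lemma dart_walk_0 [simp]: "dart_walk d 0 = d"
  by (simp add: dart_walk_def)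

lemma dart_walk_Suc: "dart_walk d (Suc k) = step rot (dart_walk d k)"
  by (simp add: dart_walk_def)

lemma dart_walk_add: "dart_walk d (a + b) = dart_walk (dart_walk d a) b"
  unfolding dart_walk_def by (metis add.commute comp_apply funpow_add)

lemma dart_walk_in_adj: "d \<in> R \<Longrightarrow> dart_walk d k \<in> R"
  by (induction k) (auto simp: dart_walk_Suc step_in_adj)

lemma dart_walk_Suc_cancel:
  "d \<in> R \<Longrightarrow> dart_walk d (Suc a) = dart_walk d (Suc b) \<Longrightarrow> dart_walk d a = dart_walk d b"
  using inj_on_step dart_walk_in_adj unfolding dart_walk_Suc inj_on_def by blast

lemma dart_walk_returns:
  assumes "d \<in> R" and "dart_walk d a = dart_walk d (a + k)"
  shows "dart_walk d k = d"
  using assms(2)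
proof (induction a)
  case (Suc a)
  then show ?case using dart_walk_Suc_cancel[OF assms(1), of a "a + k"] by simp
qed simp

lemma dart_walk_periodic: assumes "d \<in> R" shows "\<exists>p>0. dart_walk d p = d"
proof -
  have "card (dart_walk d ` {0..card R}) \<le> card R"
    by (rule card_mono[OF finite_adj]) (use dart_walk_in_adj[OF assms] in blast)
  then have "\<not> inj_on (dart_walk d) {0..card R}"
    using card_image[of "dart_walk d" "{0..card R}"] by auto
  then obtain a b where "a \<noteq> b" "dart_walk d a = dart_walk d b"
    unfolding inj_on_def by blast
  then obtain a b where "a < b" "dart_walk d a = dart_walk d b"
    using linorder_neqE_nat by metis
  then show ?thesis using dart_walk_returns[OF assms, of a "b - a"] by (intro exI[of _ "b - a"]) simp
qed

definition dart_period :: "vtx \<times> vtx \<Rightarrow> nat" where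
  "dart_period d = (LEAST p. 0 < p \<and> dart_walk d p = d)"

lemma
  assumes "d \<in> R"
  shows dart_period_pos: "0 < dart_period d"
    and dart_walk_dart_period: "dart_walk d (dart_period d) = d"
proof -
  obtain p where "0 < p \<and> dart_walk d p = d" using dart_walk_periodic[OF assms] by blast
  then have "0 < dart_period d \<and> dart_walk d (dart_period d) = d"
    unfolding dart_period_def by (rule LeastI)
  then show "0 < dart_period d" "dart_walk d (dart_period d) = d" by auto
qed

lemma dart_walk_mod_period:
  assumes "d \<in> R" shows "dart_walk d k = dart_walk d (k mod dart_period d)"
proof (induction k rule: less_induct)
  case (less k)
  show ?case
  proof (cases "k < dart_period d")
    case False
    then have "dart_walk d k = dart_walk d (k - dart_period d)"
      using dart_walk_add[of d "dart_period d" "k - dart_period d"] dart_walk_dart_period[OF assms] by simp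
    also have "\<dots> = dart_walk d ((k - dart_period d) mod dart_period d)"
      using less.IH[of "k - dart_period d"] dart_period_pos[OF assms] False by simp
    also have "(k - dart_period d) mod dart_period d = k mod dart_period d"
      using False by (simp add: le_mod_geq)
    finally show ?thesis .
  qed simp
qed

lemma inj_on_dart_walk_period:
  assumes "d \<in> R" shows "inj_on (dart_walk d) {..<dart_period d}"
proof -
  have False if "a < b" "b < dart_period d" "dart_walk d a = dart_walk d b" for a b
  proof -
    have "0 < b - a \<and> dart_walk d (b - a) = d"
      using dart_walk_returns[OF assms, of a "b - a"] that by simp
    then have "dart_period d \<le> b - a" unfolding dart_period_def by (rule Least_le)
    then show False using that by simp
  qed
  then show ?thesis by (intro inj_onI) (metis lessThan_iff linorder_neqE_nat)
qed

lemma range_dart_walk: assumes "d \<in> R" shows "range (dart_walk d) = dart_walk d ` {..<dart_period d}"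
proof
  show "range (dart_walk d) \<subseteq> dart_walk d ` {..<dart_period d}"
  proof
    fix z assume "z \<in> range (dart_walk d)"
    then obtain k where "z = dart_walk d (k mod dart_period d)"
      using dart_walk_mod_period[OF assms] by auto
    then show "z \<in> dart_walk d ` {..<dart_period d}" using dart_period_pos[OF assms] by simp
  qed
qed auto

definition contour :: "vtx \<times> vtx \<Rightarrow> nat \<Rightarrow> vtx" where
  "contour d k = fst (dart_walk d k)"

lemma contour_Suc: "contour d (Suc k) = snd (dart_walk d k)"
  by (simp add: contour_def dart_walk_Suc step_def)

lemma dart_walk_eq_contour: "dart_walk d k = (contour d k, contour d (Suc k))"
  by (simp add: contour_Suc) (simp add: contour_def)

lemma reverse_dart_in_walk:
  assumes "d \<in> R" and "(u, v) \<in> range (dart_walk d)"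
  shows "(v, u) \<in> range (dart_walk d)"
proof -
  \<comment> \<open>after entering the far side of the edge uv the walk can only leave it through vu\<close>
  obtain a where a: "dart_walk d a = (u, v)" using assms(2) by auto
  have uv: "(u, v) \<in> R" using dart_walk_in_adj[OF assms(1), of a] a by simp
  obtain S where "v \<in> S" "u \<notin> S"
    and out: "\<And>a b. (a, b) \<in> R \<Longrightarrow> a \<in> S \<Longrightarrow> b \<notin> S \<Longrightarrow> (a, b) = (v, u)"
    by (rule adj_edge_separates[OF uv]) auto
  have "contour (u, v) 1 \<in> S" "contour (u, v) (dart_period (u, v)) \<notin> S"
    using \<open>v \<in> S\<close> \<open>u \<notin> S\<close> dart_walk_dart_period[OF uv] by (simp_all add: contour_def dart_walk_Suc step_def)
  then obtain k where k: "contour (u, v) k \<in> S" "contour (u, v) (Suc k) \<notin> S"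
    using exists_step_leaving[of "\<lambda>x. x \<in> S" "contour (u, v)" 1 "dart_period (u, v)"]
      dart_period_pos[OF uv] by auto
  have "(contour (u, v) k, contour (u, v) (Suc k)) \<in> R"
    using dart_walk_in_adj[OF uv, of k] by (simp only: dart_walk_eq_contour)
  then have "dart_walk (u, v) k = (v, u)"
    using out k by (simp only: dart_walk_eq_contour)
  then have "dart_walk d (a + k) = (v, u)" using a by (simp add: dart_walk_add)
  then show ?thesis using rangeI[of "dart_walk d" "a + k"] by simp
qed

lemma darts_from_in_walk:
  assumes "d \<in> R" and xy: "(x, y) \<in> range (dart_walk d)" and z: "z \<in> set (rot x)"
  shows "(x, z) \<in> range (dart_walk d)"
proof -
  let ?O = "range (dart_walk d)" and ?L = "length (rot x)"
  have next_in: "(x', next_ccw rot x' y') \<in> ?O" if x'y': "(x', y') \<in> ?O" for x' y'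
  proof -
    obtain a where "dart_walk d a = (y', x')" using reverse_dart_in_walk[OF assms(1) x'y'] by auto
    then have "dart_walk d (Suc a) = (x', next_ccw rot x' y')" by (simp add: dart_walk_Suc step_def)
    then show ?thesis using rangeI[of "dart_walk d" "Suc a"] by simp
  qed
  have "(x, y) \<in> R" using xy dart_walk_in_adj[OF assms(1)] by auto
  then have "y \<in> set (rot x)" by (simp only: adj_iff)
  then obtain i where i: "i < ?L" "rot x ! i = y" by (auto simp: in_set_conv_nth)
  have rotation: "(x, rot x ! ((i + k) mod ?L)) \<in> ?O" for k
  proof (induction k)
    case 0 then show ?case using i xy by simp
  next
    case (Suc k)
    have "0 < ?L" using i(1) by linarith
    then have "(i + k) mod ?L < ?L" by simp
    then have "next_ccw rot x (rot x ! ((i + k) mod ?L)) = rot x ! ((i + Suc k) mod ?L)"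
      by (simp add: next_ccw_nth mod_Suc_eq)
    then show ?case using next_in[OF Suc.IH] by simp
  qed
  obtain j where j: "j < ?L" "rot x ! j = z" using z by (auto simp: in_set_conv_nth)
  have "(i + (j + ?L - i)) mod ?L = j" using i j by simp
  then show ?thesis using rotation[of "j + ?L - i"] j by simp
qed

lemma range_dart_walk_eq_adj:
  assumes "d \<in> R" shows "range (dart_walk d) = R"
proof
  show "range (dart_walk d) \<subseteq> R" using dart_walk_in_adj[OF assms] by auto
next
  define X where "X = {x. \<exists>y. (x, y) \<in> range (dart_walk d)}"
  obtain r w where d: "d = (r, w)" by (cases d)
  have "r \<in> V" using assms d adj_subset by auto
  have "dart_walk d 0 = (r, w)" using d by simp
  then have "r \<in> X" unfolding X_def using rangeI[of "dart_walk d" 0] by auto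
  have X: "x \<in> X" if "x \<in> V" for x
  proof -
    have "(r, x) \<in> R\<^sup>*" using adj_connected \<open>r \<in> V\<close> that by blast
    then show ?thesis
    proof (induction rule: rtrancl_induct)
      case (step y z)
      then obtain y' where "(y, y') \<in> range (dart_walk d)" unfolding X_def by blast
      moreover have "z \<in> set (rot y)" using step(2) by (simp only: adj_iff)
      ultimately have "(y, z) \<in> range (dart_walk d)" by (rule darts_from_in_walk[OF assms])
      then have "(z, y) \<in> range (dart_walk d)" by (rule reverse_dart_in_walk[OF assms])
      then show ?case unfolding X_def by blast
    qed (rule \<open>r \<in> X\<close>)
  qed
  show "R \<subseteq> range (dart_walk d)"
  proof clarify
    fix x z assume xz: "(x, z) \<in> R"
    then have "x \<in> X" using adj_subset X by blast
    then obtain y where "(x, y) \<in> range (dart_walk d)" unfolding X_def by blast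
    moreover have "z \<in> set (rot x)" using xz by (simp only: adj_iff)
    ultimately show "(x, z) \<in> range (dart_walk d)" by (rule darts_from_in_walk[OF assms])
  qed
qed

lemma dart_period_eq_card_adj: assumes "d \<in> R" shows "dart_period d = card R"
proof -
  have "card (dart_walk d ` {..<dart_period d}) = dart_period d"
    using inj_on_dart_walk_period[OF assms] by (simp add: card_image)
  then show ?thesis using range_dart_walk_eq_adj[OF assms] range_dart_walk[OF assms] by simp
qed

lemma contour_add_card_adj: "d \<in> R \<Longrightarrow> contour d (k + card R) = contour d k"
  using dart_walk_add[of d "card R" k] dart_walk_dart_period dart_period_eq_card_adj
  by (simp add: contour_def add.commute)

lemma inj_on_dart_walk: "d \<in> R \<Longrightarrow> inj_on (dart_walk d) {..<card R}"
  using inj_on_dart_walk_period dart_period_eq_card_adj by simp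

lemma dart_walk_image: "d \<in> R \<Longrightarrow> dart_walk d ` {..<card R} = R"
  using range_dart_walk range_dart_walk_eq_adj dart_period_eq_card_adj by simp

lemma walk_eq_contour: "walk n m rot r w = map (contour (r, w)) [0..<Suc (card R)]"
  unfolding walk_def contour_def dart_walk_def card_adj by simp

lemma contour_in_verts: "d \<in> R \<Longrightarrow> contour d k \<in> V"
  using dart_walk_in_adj[of d k] adj_subset by (auto simp: contour_def)

lemma contour_image: assumes "d \<in> R" shows "contour d ` {..<card R} = V"
proof
  show "contour d ` {..<card R} \<subseteq> V" using contour_in_verts[OF assms] by blast
next
  show "V \<subseteq> contour d ` {..<card R}"
  proof
    fix x assume "x \<in> V"
    have "\<exists>y. (x, y) \<in> R"
    proof (cases "x = fst d")
      case True then show ?thesis using assms by (metis prod.collapse)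
    next
      case False
      have "fst d \<in> V" using assms adj_subset by (auto simp: mem_Times_iff)
      then have "(fst d, x) \<in> R\<^sup>*" using adj_connected \<open>x \<in> V\<close> by blast
      then obtain y where "(y, x) \<in> R" using False by (metis rtranclE)
      then show ?thesis using sym_adj by (meson symD)
    qed
    then obtain y where "(x, y) \<in> dart_walk d ` {..<card R}" using dart_walk_image[OF assms] by blast
    then obtain k where "k < card R" "dart_walk d k = (x, y)" by auto
    then have "contour d k = x" by (simp add: contour_def)
    then show "x \<in> contour d ` {..<card R}" using \<open>k < card R\<close> by blast
  qed
qed

lemma contour_stays_on_side:
  assumes "d \<in> R" and side: "contour d (Suc t) \<in> S" "r \<notin> S"
    and out: "\<And>a b. (a, b) \<in> R \<Longrightarrow> a \<in> S \<Longrightarrow> b \<notin> S \<Longrightarrow> b = r"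
    and no_return: "\<And>s. t < s \<Longrightarrow> s \<le> p \<Longrightarrow> contour d s \<noteq> r"
    and "t < p"
  shows "contour d p \<in> S"
proof (rule ccontr)
  assume "contour d p \<notin> S"
  then obtain k where k: "Suc t \<le> k" "k < p" "contour d k \<in> S" "contour d (Suc k) \<notin> S"
    using exists_step_leaving[of "\<lambda>x. x \<in> S" "contour d" "Suc t" p] side \<open>t < p\<close> by auto
  have "(contour d k, contour d (Suc k)) \<in> R"
    using dart_walk_in_adj[OF assms(1), of k] by (simp only: dart_walk_eq_contour)
  then have "contour d (Suc k) = r" using out k(3,4) by blast
  then show False using no_return[of "Suc k"] k by simp
qed

lemma excursions_disjoint:
  assumes dR: "d \<in> R" and r0: "contour d 0 = r" and rj: "contour d j = r"
  shows "contour d ` {1..<j} \<inter> contour d ` {Suc j..<card R} \<subseteq> {r}"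
proof
  fix v assume "v \<in> contour d ` {1..<j} \<inter> contour d ` {Suc j..<card R}"
  then obtain p q where p: "1 \<le> p" "p < j" "contour d p = v"
    and q: "Suc j \<le> q" "q < card R" "contour d q = v" by auto
  show "v \<in> {r}"
  proof (rule ccontr)
    assume "v \<notin> {r}"
    \<comment> \<open>t is the last visit of r before p, so the walk is on the far side S of the edge
      it leaves r by at time t up to time p, hence again at q; but it can enter S only by
      that dart, which is taken once per period\<close>
    define t where "t = (GREATEST t. t < p \<and> contour d t = r)"
    have t: "t < p \<and> contour d t = r" unfolding t_def
      by (rule GreatestI_nat[of _ 0 p]) (use r0 p in auto)
    have no_return: "contour d s \<noteq> r" if "t < s" "s \<le> p" for s
    proof (cases "s = p")
      case False
      have "s \<le> t" if "contour d s = r" unfolding t_def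
        by (rule Greatest_le_nat[of _ s p]) (use \<open>s \<le> p\<close> False that in auto)
      then show ?thesis using \<open>t < s\<close> by auto
    qed (use p \<open>v \<notin> {r}\<close> in auto)
    define c where "c = contour d (Suc t)"
    have dt: "dart_walk d t = (r, c)" using t by (simp add: dart_walk_eq_contour c_def)
    then have "(r, c) \<in> R" using dart_walk_in_adj[OF dR, of t] by simp
    then obtain S where "c \<in> S" "r \<notin> S"
      and out: "\<And>a b. (a, b) \<in> R \<Longrightarrow> a \<in> S \<Longrightarrow> b \<notin> S \<Longrightarrow> (a, b) = (c, r)"
      and inn: "\<And>a b. (a, b) \<in> R \<Longrightarrow> a \<notin> S \<Longrightarrow> b \<in> S \<Longrightarrow> (a, b) = (r, c)"
      by (rule adj_edge_separates) auto
    have "contour d p \<in> S"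
      by (rule contour_stays_on_side[OF dR, of t S r])
        (use \<open>c \<in> S\<close> \<open>r \<notin> S\<close> c_def out no_return t in auto)
    then have "contour d q \<in> S" using p q by simp
    moreover have "contour d j \<notin> S" using rj \<open>r \<notin> S\<close> by simp
    ultimately obtain k where k: "j \<le> k" "k < q" "contour d k \<notin> S" "contour d (Suc k) \<in> S"
      using exists_step_leaving[of "\<lambda>x. x \<notin> S" "contour d" j q] q by auto
    have "(contour d k, contour d (Suc k)) \<in> R"
      using dart_walk_in_adj[OF dR, of k] by (simp only: dart_walk_eq_contour)
    then have "dart_walk d k = dart_walk d t"
      using inn k(3,4) dt by (simp add: dart_walk_eq_contour)
    moreover have "k < card R" "t < card R" using k q t p by auto
    ultimately have "k = t" using inj_on_dart_walk[OF dR] by (auto dest: inj_onD)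
    then show False using k p t by simp
  qed
qed

lemma contour_split:
  assumes dR: "d \<in> R" and j: "0 < j" "j < card R" and r0: "contour d 0 = r" and rj: "contour d j = r"
  shows "map (contour d) [0..<Suc (card R)]
      = [r] @ map (contour d) [1..<j] @ [r] @ map (contour d) [Suc j..<card R] @ [r]"
    and "map (contour (dart_walk d j)) [0..<Suc (card R)]
      = [r] @ map (contour d) [Suc j..<card R] @ [r] @ map (contour d) [1..<j] @ [r]"
proof -
  let ?L = "card R"
  have rL: "contour d ?L = r" using contour_add_card_adj[OF dR, of 0] r0 by simp
  have "[0..<Suc ?L] = [0] @ [1..<j] @ [j] @ [Suc j..<?L] @ [?L]"
    using upt_split[of 0 j "Suc ?L"] j by (simp add: upt_conv_Cons)
  then show "map (contour d) [0..<Suc ?L]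
      = [r] @ map (contour d) [1..<j] @ [r] @ map (contour d) [Suc j..<?L] @ [r]"
    using r0 rj rL by simp
  have shift: "contour (dart_walk d j) k = contour d (j + k)" for k
    by (simp add: contour_def dart_walk_add)
  have "map (contour (dart_walk d j)) [0..<Suc ?L] = map (contour d) (map (\<lambda>k. j + k) [0..<Suc ?L])"
    by (simp add: shift)
  also have "map (\<lambda>k. j + k) [0..<Suc ?L] = [j..<Suc (?L + j)]"
    using map_add_upt[of j "Suc ?L"] by (simp add: add.commute)
  also have "\<dots> = [j] @ [Suc j..<?L] @ [?L] @ [Suc ?L..<?L + j] @ [?L + j]"
    using upt_split[of j ?L "Suc (?L + j)"] j by (simp add: upt_conv_Cons)
  finally have split: "map (contour (dart_walk d j)) [0..<Suc ?L]
      = map (contour d) ([j] @ [Suc j..<?L] @ [?L] @ [Suc ?L..<?L + j] @ [?L + j])" .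
  moreover have "map (contour d) [Suc ?L..<?L + j] = map (contour d) [1..<j]"
  proof (rule nth_equalityI)
    fix k assume "k < length (map (contour d) [Suc ?L..<?L + j])"
    then show "map (contour d) [Suc ?L..<?L + j] ! k = map (contour d) [1..<j] ! k"
      using contour_add_card_adj[OF dR, of "Suc k"] by (simp add: add.commute)
  qed simp
  moreover have "contour d (?L + j) = r" using contour_add_card_adj[OF dR, of j] rj by (simp add: add.commute)
  ultimately show "map (contour (dart_walk d j)) [0..<Suc ?L]
      = [r] @ map (contour d) [Suc j..<?L] @ [r] @ map (contour d) [1..<j] @ [r]"
    unfolding split using rj rL by simp
qed

lemma walk_root_split:
  assumes e: "e \<in> set (rot r)" and e': "e' \<in> set (rot r)" and "e' \<noteq> e"
  obtains As Bs where "walk n m rot r e = [r] @ As @ [r] @ Bs @ [r]"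
    and "walk n m rot r e' = [r] @ Bs @ [r] @ As @ [r]"
    and "set As \<inter> set Bs \<subseteq> {r}"
    and "card (set As - {r}) + card (set Bs - {r}) = card V - 1"
proof -
  define d where "d = (r, e)"
  have dR: "d \<in> R" using e by (simp add: d_def adj_iff)
  have "(r, e') \<in> dart_walk d ` {..<card R}" using dart_walk_image[OF dR] e' by (simp add: adj_iff)
  then obtain j where j: "j < card R" "dart_walk d j = (r, e')" by auto
  have "j \<noteq> 0"
  proof
    assume "j = 0"
    then show False using j \<open>e' \<noteq> e\<close> by (simp add: d_def)
  qed
  have r0: "contour d 0 = r" and rj: "contour d j = r" using j by (simp_all add: contour_def d_def)
  define As where "As = map (contour d) [1..<j]"
  define Bs where "Bs = map (contour d) [Suc j..<card R]"
  have "walk n m rot r e = [r] @ As @ [r] @ Bs @ [r]"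
    using contour_split(1)[OF dR _ j(1) r0 rj] \<open>j \<noteq> 0\<close>
    by (simp add: walk_eq_contour As_def Bs_def flip: d_def)
  moreover have "walk n m rot r e' = [r] @ Bs @ [r] @ As @ [r]"
    using contour_split(2)[OF dR _ j(1) r0 rj] \<open>j \<noteq> 0\<close>
    by (simp add: walk_eq_contour As_def Bs_def flip: j(2))
  moreover have disj: "set As \<inter> set Bs \<subseteq> {r}"
    using excursions_disjoint[OF dR r0 rj] by (simp add: As_def Bs_def)
  moreover have "card (set As - {r}) + card (set Bs - {r}) = card V - 1"
  proof -
    have "{..<card R} = insert 0 (insert j ({1..<j} \<union> {Suc j..<card R}))" using j(1) by auto
    then have "V = insert (contour d 0) (insert (contour d j) (set As \<union> set Bs))"
      unfolding contour_image[OF dR, symmetric] As_def Bs_def by (simp add: image_Un)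
    then have V: "V = insert r (set As \<union> set Bs)" using r0 rj by simp
    then have "V - {r} = (set As - {r}) \<union> (set Bs - {r})" by auto
    moreover have "card (V - {r}) = card V - 1"
      using V card_Diff_singleton[of r V] by blast
    moreover have "card ((set As - {r}) \<union> (set Bs - {r})) = card (set As - {r}) + card (set Bs - {r})"
      by (rule card_Un_disjoint) (use disj in auto)
    ultimately show ?thesis by simp
  qed
  ultimately show ?thesis by (rule that)
qed

end

theorem mainTheorem2:
  fixes n m i :: nat and rot :: "vtx \<Rightarrow> vtx list" and e e' :: vtx
  assumes "plane_bip_tree n m rot"
    and "even (n + m)"
    and "i \<in> {1..n}"
    and "e \<in> set (rot (W i))"
    and "e' \<in> set (rot (W i))"
  shows "tree_inv n m rot (W i) e = tree_inv n m rot (W i) e'"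
proof (cases "e' = e")
  case False
  interpret plane_tree n m rot by (rule plane_tree.intro) (rule assms(1))
  obtain As Bs where walks: "walk n m rot (W i) e = [W i] @ As @ [W i] @ Bs @ [W i]"
      "walk n m rot (W i) e' = [W i] @ Bs @ [W i] @ As @ [W i]"
    and disj: "set As \<inter> set Bs \<subseteq> {W i}"
    and card: "card (set As - {W i}) + card (set Bs - {W i}) = card V - 1"
    by (rule walk_root_split[OF assms(4,5) False])
  have "W i \<in> V" using assms(3) by (simp add: verts_def)
  then have "0 < card V" using finite_verts card_gt_0_iff by blast
  then have "odd (card V - 1)" using assms(2) card_verts by simp
  then show ?thesis
    unfolding tree_inv_eq_inv_parity cstr_eq_tokens walks
    by (intro inv_parity_swap_excursions[OF disj]) (simp add: card)
qed simp

end
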